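(* Let $n \geq 2$ be an integer and $A$ a finite set of size $q \geq 2$. Let $d_1, \dots, d_\ell$ be the divisors $d$ of $n$ with $d\neq 1$ (including $d=n$). Then \[ \mathrm{ICA}(\mathbb{Z}_n; A) \cong (\mathbb{Z}_{d_1} \wr \mathrm{Sym}_{\alpha(d_1,q)}) \times \dots \times (\mathbb{Z}_{d_\ell} \wr \mathrm{Sym}_{\alpha(d_\ell,q)}) \times \mathrm{Sym}_q. \]
   Context: A cellular automaton over $\mathbb{Z}_n$ and $A$ is a map $\tau: A^{\mathbb{Z}_n}\to A^{\mathbb{Z}_n}$ for which there exist a finite $S\subseteq\mathbb{Z}_n$ and $\mu:A^S\to A$ with $(g)(x)\tau = ((R_g\circ x)|_S)\mu$ for all $x$ and $g$, where $R_g\circ x$ is $h\mapsto x(h+g)$ (maps applied on the right); $\mathrm{CA}(\mathbb{Z}_n;A)$ is the semigroup of these under composition and $\mathrm{ICA}(\mathbb{Z}_n;A)$ is its group of units. $\mathrm{Sym}_\alpha$ is the symmetric group on $\{1,\dots,\alpha\}$. $\mathbb{Z}_d\wr\mathrm{Sym}_\alpha = \{(v;\phi): v\in(\mathbb{Z}_d)^\alpha,\ \phi\in\mathrm{Sym}_\alpha\}$ with product $(v;\phi)(w;\psi) = (v + w^\phi;\phi\psi)$, where $\phi$ acts on $w$ by permuting coordinates. $\alpha(d,q) = \frac{1}{d}\sum_{b\mid d}\mu(d/b) q^b$ with $\mu$ the Möbius function (the number of orbits of size $d$ of the cyclic shift on $A^n$). *)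

theory Defs
  imports "HOL-Algebra.Algebra" "HOL-Computational_Algebra.Squarefree"
begin

definition moebius :: "nat \<Rightarrow> int" where
  "moebius m = (if squarefree m then (-1) ^ card (prime_factors m) else 0)"

definition alpha :: "nat \<Rightarrow> nat \<Rightarrow> nat" where
  "alpha d q = nat ((\<Sum>b\<in>{b. b dvd d}. moebius (d div b) * int q ^ b) div int d)"

text \<open>Configurations A^(Z_n); Z_n is represented by {0..<n} with addition mod n.\<close>
definition configs :: "nat \<Rightarrow> 'a set \<Rightarrow> (nat \<Rightarrow> 'a) set" where
  "configs n A = ({0..<n} \<rightarrow>\<^sub>E A)"

definition is_CA :: "nat \<Rightarrow> 'a set \<Rightarrow> ((nat \<Rightarrow> 'a) \<Rightarrow> (nat \<Rightarrow> 'a)) \<Rightarrow> bool" where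
  "is_CA n A \<tau> \<longleftrightarrow>
     \<tau> \<in> configs n A \<rightarrow>\<^sub>E configs n A \<and>
     (\<exists>S \<mu>. S \<subseteq> {0..<n} \<and> \<mu> \<in> (S \<rightarrow>\<^sub>E A) \<rightarrow> A \<and>
        (\<forall>x\<in>configs n A. \<forall>g\<in>{0..<n}.
            \<tau> x g = \<mu> (restrict (\<lambda>h. x ((h + g) mod n)) S)))"

text \<open>The semigroup (monoid) CA(Z_n;A) under composition; maps act on the right,
  so the product tau sigma is "first tau, then sigma".\<close>
definition CA_monoid :: "nat \<Rightarrow> 'a set \<Rightarrow> ((nat \<Rightarrow> 'a) \<Rightarrow> (nat \<Rightarrow> 'a)) monoid" where
  "CA_monoid n A = \<lparr> carrier = {\<tau>. is_CA n A \<tau>},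
                     monoid.mult = (\<lambda>\<tau> \<sigma>. \<lambda>x\<in>configs n A. \<sigma> (\<tau> x)),
                     one = (\<lambda>x\<in>configs n A. x) \<rparr>"

definition ICA :: "nat \<Rightarrow> 'a set \<Rightarrow> ((nat \<Rightarrow> 'a) \<Rightarrow> (nat \<Rightarrow> 'a)) monoid" where
  "ICA n A = units_of (CA_monoid n A)"

text \<open>Permutations are
  composed as functions (as in sym_group), and w^phi is w o phi^-1, so that this is
  a group action.\<close>
definition wreath :: "nat \<Rightarrow> nat \<Rightarrow> ((nat \<Rightarrow> nat) \<times> (nat \<Rightarrow> nat)) monoid" where
  "wreath d a = \<lparr> carrier = ({1..a} \<rightarrow>\<^sub>E {0..<d}) \<times> {\<phi>. \<phi> permutes {1..a}},
                  monoid.mult = (\<lambda>(v, \<phi>) (w, \<psi>).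
                            ((\<lambda>i\<in>{1..a}. (v i + w (Hilbert_Choice.inv \<phi> i)) mod d), \<phi> \<circ> \<psi>)),
                  one = ((\<lambda>i\<in>{1..a}. 0), id) \<rparr>"

end

theory Submission
  imports Defs
begin

text \<open>A cellular automaton over \<open>\<int>\<^sub>n\<close> is exactly a map of configurations commuting with
  the shift, so an invertible one permutes the shift orbits and preserves their sizes.  Moebius
  inversion of \<open>q ^ d = \<Sum>\<^sub>b\<^sub>|\<^sub>d b \<cdot> alpha b q\<close> shows that there are \<open>alpha d q\<close> orbits
  of size \<open>d\<close>.  Choosing a base point in every orbit, a unit is determined by where it sends the
  base points: for each \<open>d\<close> a permutation of the orbits of size \<open>d\<close> together with a shift in
  \<open>\<int>\<^sub>d\<close> for each of them, i.e. an element of \<open>wreath d (alpha d q)\<close>, and every such choice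
  is realised.  For \<open>d = 1\<close> the shifts are trivial and \<open>alpha 1 q = q\<close>, which gives the
  factor \<open>sym_group q\<close>.\<close>

section \<open>Moebius inversion\<close>

lemma moebius_not_squarefree: "\<not> squarefree m \<Longrightarrow> moebius m = 0"
  by (simp add: moebius_def)

lemma moebius_prime_mult:
  assumes p: "Factorial_Ring.prime (p::nat)" and "c > 0" and "\<not> p dvd c"
  shows "moebius (p * c) = - moebius c"
proof -
  have "coprime p c" using p assms(3) by (simp add: prime_imp_coprime)
  then have "squarefree (p * c) \<longleftrightarrow> squarefree c"
    using squarefree_mult_coprime squarefree_prime[OF p] squarefree_multD(2)[of p c] by blast
  moreover have "prime_factors (p * c) = insert p (prime_factors c)"
    using p assms(2) by (simp add: prime_factors_product prime_prime_factors)
  moreover have "p \<notin> prime_factors c" using assms(3) by auto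
  ultimately show ?thesis unfolding moebius_def by (simp add: card_insert_if)
qed

text \<open>The divisors of \<open>m\<close> divisible by a prime \<open>p\<close> are, up to non-squarefree ones,
  the \<open>p\<close>-multiples of those not divisible by \<open>p\<close>.\<close>
lemma sum_moebius_divisors_prime_multiples:
  assumes m: "m > 0" and p: "Factorial_Ring.prime (p::nat)" "p dvd m"
  shows "(\<Sum>b | b dvd m \<and> p dvd b. moebius b) = - (\<Sum>b | b dvd m \<and> \<not> p dvd b. moebius b)"
proof -
  define B where "B = {b. b dvd m \<and> \<not> p dvd b}"
  have fin: "finite {b. b dvd m \<and> p dvd b}" using m by simp
  have pB: "(*) p ` B \<subseteq> {b. b dvd m \<and> p dvd b}"
    using p by (auto simp: B_def prime_imp_coprime divides_mult)
  have "(\<Sum>b | b dvd m \<and> p dvd b. moebius b) = (\<Sum>b\<in>(*) p ` B. moebius b)"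
  proof (rule sum.mono_neutral_right[OF fin pB], rule ballI)
    fix b assume b: "b \<in> {b. b dvd m \<and> p dvd b} - (*) p ` B"
    then have bm: "b dvd m" and "p dvd b" by auto
    then obtain c where c: "b = p * c" by blast
    with bm have "c dvd m" by (metis dvd_mult_right)
    then have "p dvd c" using b c by (auto simp: B_def)
    then have "p * p dvd b" using c by simp
    then show "moebius b = 0"
      using p by (intro moebius_not_squarefree not_squarefreeI[of p]) (auto simp: power2_eq_square)
  qed
  also have "\<dots> = (\<Sum>c\<in>B. moebius (p * c))"
    using p by (intro sum.reindex[unfolded comp_def]) (auto simp: inj_on_def prime_gt_0_nat)
  also have "\<dots> = (\<Sum>c\<in>B. - moebius c)"
    using m by (intro sum.cong refl moebius_prime_mult[OF p(1)]) (auto simp: B_def intro: dvd_pos_nat)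
  finally show ?thesis by (simp add: sum_negf B_def)
qed

lemma sum_moebius_divisors:
  assumes m: "m > (0::nat)"
  shows "(\<Sum>b | b dvd m. moebius b) = (if m = 1 then 1 else 0)"
proof (cases "m = 1")
  case True then show ?thesis by (simp add: moebius_def)
next
  case False
  then obtain p where p: "Factorial_Ring.prime p" "p dvd m" using m prime_factor_nat by blast
  have "(\<Sum>b | b dvd m. moebius b)
      = sum moebius ({b. b dvd m \<and> p dvd b} \<union> {b. b dvd m \<and> \<not> p dvd b})"
    by (intro arg_cong[where f="sum moebius"]) blast
  also have "\<dots> = (\<Sum>b | b dvd m \<and> p dvd b. moebius b) + (\<Sum>b | b dvd m \<and> \<not> p dvd b. moebius b)"
    by (rule sum.union_disjoint) (use m in auto)
  finally show ?thesis using sum_moebius_divisors_prime_multiples[OF m p] False by simp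
qed

lemma sum_moebius_quotients_multiples:
  assumes "d > (0::nat)" "c dvd d"
  shows "(\<Sum>b | b dvd d \<and> c dvd b. moebius (d div b)) = (if c = d then 1 else 0)"
proof -
  obtain e where e: "d = c * e" using assms by auto
  have c0: "c > 0" and e0: "e > 0" using e assms by auto
  have "(\<Sum>b | b dvd d \<and> c dvd b. moebius (d div b)) = (\<Sum>k | k dvd e. moebius k)"
    by (rule sum.reindex_bij_witness[of _ "\<lambda>k. d div k" "\<lambda>b. d div b"])
       (use e c0 e0 in \<open>auto elim!: dvdE\<close>)
  also have "\<dots> = (if e = 1 then 1 else 0)" by (rule sum_moebius_divisors[OF e0])
  finally show ?thesis using e c0 by auto
qed

lemma moebius_inversion:
  fixes f F :: "nat \<Rightarrow> int"
  assumes d: "d > 0" and F: "\<And>m. m dvd d \<Longrightarrow> F m = (\<Sum>c | c dvd m. f c)"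
  shows "(\<Sum>b | b dvd d. moebius (d div b) * F b) = f d"
proof -
  define D where "D = {b. b dvd d}"
  have finD: "finite D" using d by (simp add: D_def)
  have "(\<Sum>b\<in>D. moebius (d div b) * F b) = (\<Sum>b\<in>D. \<Sum>c\<in>{c\<in>D. c dvd b}. moebius (d div b) * f c)"
  proof (rule sum.cong[OF refl])
    fix b assume b: "b \<in> D"
    then have "{c\<in>D. c dvd b} = {c. c dvd b}" unfolding D_def by (auto intro: dvd_trans)
    then show "moebius (d div b) * F b = (\<Sum>c\<in>{c\<in>D. c dvd b}. moebius (d div b) * f c)"
      using F b unfolding D_def by (simp add: sum_distrib_left)
  qed
  also have "\<dots> = (\<Sum>c\<in>D. (\<Sum>b | b dvd d \<and> c dvd b. moebius (d div b)) * f c)"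
    by (subst sum.swap_restrict[OF finD finD]) (simp add: D_def sum_distrib_right)
  also have "\<dots> = (\<Sum>c\<in>D. (if c = d then 1 else 0) * f c)"
    using sum_moebius_quotients_multiples[OF d] by (intro sum.cong) (auto simp: D_def)
  also have "\<dots> = f d" using finD by (simp add: D_def if_distrib[where f="\<lambda>x. x * _"] sum.delta cong: if_cong)
  finally show ?thesis by (simp add: D_def)
qed

lemma alpha_1 [simp]: "alpha 1 q = q"
proof -
  have "{b. b dvd (1::nat)} = {1}" by auto
  then show ?thesis unfolding alpha_def by (simp add: moebius_def)
qed

section \<open>Shifts, periods and orbits\<close>

lemma mod_add_right_cancel_nat:
  "((a::nat) + c) mod n = (b + c) mod n \<longleftrightarrow> a mod n = b mod n"
proof -
  have "(x + c) mod n = (y + c) mod n \<longleftrightarrow> x mod n = y mod n" if "x \<le> y" for x y :: nat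
  proof -
    have "(y + c) mod n = (x + c) mod n \<longleftrightarrow> n dvd y - x"
      using mod_eq_dvd_iff_nat[of "x + c" "y + c" n] that by simp
    moreover have "y mod n = x mod n \<longleftrightarrow> n dvd y - x" using mod_eq_dvd_iff_nat that by simp
    ultimately show ?thesis by auto
  qed
  then show ?thesis by (metis nat_le_linear)
qed

definition shift :: "nat \<Rightarrow> nat \<Rightarrow> (nat \<Rightarrow> 'a) \<Rightarrow> (nat \<Rightarrow> 'a)" where
  "shift n g x = (\<lambda>h\<in>{0..<n}. x ((h + g) mod n))"

lemma configs_mem: "x \<in> configs n A \<Longrightarrow> h < n \<Longrightarrow> x h \<in> A"
  unfolding configs_def by auto

lemma configs_eqI:
  "x \<in> configs n A \<Longrightarrow> y \<in> configs n A \<Longrightarrow> (\<And>h. h < n \<Longrightarrow> x h = y h) \<Longrightarrow> x = y"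
  unfolding configs_def by (rule PiE_ext) auto

lemma finite_configs: "finite A \<Longrightarrow> finite (configs n A)"
  unfolding configs_def by (simp add: finite_PiE)

lemma shift_in_configs: "n > 0 \<Longrightarrow> x \<in> configs n A \<Longrightarrow> shift n g x \<in> configs n A"
  unfolding shift_def configs_def by auto

lemma shift_shift: "n > 0 \<Longrightarrow> shift n g (shift n h x) = shift n (h + g) x"
  unfolding shift_def by (auto simp: fun_eq_iff mod_add_left_eq add.assoc) (metis add.commute)

lemma shift_mult_self: "n > 0 \<Longrightarrow> x \<in> configs n A \<Longrightarrow> shift n (n * k) x = x"
  by (rule configs_eqI[OF shift_in_configs]) (simp_all add: shift_def)

lemma shift_0: "n > 0 \<Longrightarrow> x \<in> configs n A \<Longrightarrow> shift n 0 x = x"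
  using shift_mult_self[of n x A 0] by simp

lemma shift_cancel: "n > 0 \<Longrightarrow> x \<in> configs n A \<Longrightarrow> shift n ((n - 1) * g) (shift n g x) = x"
  using shift_mult_self[of n x A g] by (simp add: shift_shift algebra_simps)

lemma shift_inj:
  "n > 0 \<Longrightarrow> x \<in> configs n A \<Longrightarrow> y \<in> configs n A \<Longrightarrow> shift n g x = shift n g y \<Longrightarrow> x = y"
  by (metis shift_cancel)

definition period :: "nat \<Rightarrow> (nat \<Rightarrow> 'a) \<Rightarrow> nat" where
  "period n x = (LEAST p. 0 < p \<and> shift n p x = x)"

context
  fixes n :: nat and A :: "'a set" and x :: "nat \<Rightarrow> 'a"
  assumes n: "n > 0" and x: "x \<in> configs n A"
begin

lemma period_pos: "period n x > 0" and shift_period: "shift n (period n x) x = x"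
proof -
  have "0 < n \<and> shift n n x = x" using shift_mult_self[OF n x, of 1] n by simp
  then have "0 < period n x \<and> shift n (period n x) x = x" unfolding period_def by (rule LeastI)
  then show "period n x > 0" "shift n (period n x) x = x" by auto
qed

lemma period_le: "0 < p \<Longrightarrow> shift n p x = x \<Longrightarrow> period n x \<le> p"
  unfolding period_def by (rule Least_le) simp

lemma shift_mult_period: "shift n (period n x * k) x = x"
proof (induction k)
  case 0 then show ?case using shift_0[OF n x] by simp
next
  case (Suc k)
  have "shift n (period n x * Suc k) x = shift n (period n x) (shift n (period n x * k) x)"
    using n by (simp add: shift_shift algebra_simps)
  then show ?case using Suc shift_period by simp
qed

lemma shift_mod_period: "shift n g x = shift n (g mod period n x) x"
proof -
  have "shift n g x = shift n (g mod period n x) (shift n (period n x * (g div period n x)) x)"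
    using n by (simp add: shift_shift)
  then show ?thesis using shift_mult_period by simp
qed

lemma shift_eq_self_iff: "shift n g x = x \<longleftrightarrow> period n x dvd g"
proof
  assume "shift n g x = x"
  then have "shift n (g mod period n x) x = x" using shift_mod_period by simp
  then have "\<not> 0 < g mod period n x"
    using period_le period_pos by (meson mod_less_divisor not_le)
  then show "period n x dvd g" by (simp add: dvd_eq_mod_eq_0)
qed (auto simp: shift_mult_period)

lemma period_dvd: "period n x dvd n"
  using shift_eq_self_iff[of n] shift_mult_self[OF n x, of 1] by simp

lemma shift_eq_shift_iff: "shift n a x = shift n b x \<longleftrightarrow> a mod period n x = b mod period n x"
proof -
  have "period n x dvd b - a" if "a \<le> b" "shift n a x = shift n b x" for a b
  proof -
    have "shift n ((n - 1) * a) (shift n b x) = shift n (b - a) (shift n (n * a) x)"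
      using n that(1) by (simp add: shift_shift algebra_simps)
    then have "shift n (b - a) x = x"
      using shift_cancel[OF n x, of a] shift_mult_self[OF n x] that(2) by simp
    then show ?thesis using shift_eq_self_iff by simp
  qed
  then show ?thesis using shift_mod_period
    by (metis mod_eq_dvd_iff_nat nat_le_linear)
qed

lemma period_shift: "period n (shift n g x) = period n x"
proof -
  have "shift n h (shift n g x) = shift n g x \<longleftrightarrow> shift n h x = x" for h
    using shift_inj[OF n shift_in_configs[OF n x] x, of g] n by (metis shift_shift add.commute)
  then show ?thesis unfolding period_def by simp
qed

end

definition shift_orbit :: "nat \<Rightarrow> (nat \<Rightarrow> 'a) \<Rightarrow> (nat \<Rightarrow> 'a) set" where
  "shift_orbit n x = range (\<lambda>g. shift n g x)"

definition orbit_rep :: "nat \<Rightarrow> (nat \<Rightarrow> 'a) \<Rightarrow> (nat \<Rightarrow> 'a)" where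
  "orbit_rep n x = (SOME y. y \<in> shift_orbit n x)"

lemma orbit_rep_mem: "orbit_rep n x \<in> shift_orbit n x"
  unfolding orbit_rep_def shift_orbit_def by (metis rangeI someI)

lemma shift_orbit_shift:
  assumes n: "n > 0" and x: "x \<in> configs n A"
  shows "shift_orbit n (shift n g x) = shift_orbit n x"
proof -
  have "shift n h (shift n g x) = shift n (g + h) x" for h
    by (rule shift_shift[OF n])
  moreover have "shift n h x = shift n ((n - 1) * g + h) (shift n g x)" for h
  proof -
    have "shift n h x = shift n h (shift n ((n - 1) * g) (shift n g x))" using shift_cancel[OF n x] by simp
    also have "\<dots> = shift n ((n - 1) * g + h) (shift n g x)" by (rule shift_shift[OF n])
    finally show ?thesis .
  qed
  ultimately show ?thesis unfolding shift_orbit_def by blast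
qed

lemma orbit_rep_shift: "n > 0 \<Longrightarrow> x \<in> configs n A \<Longrightarrow> orbit_rep n (shift n g x) = orbit_rep n x"
  unfolding orbit_rep_def by (simp add: shift_orbit_shift)

lemma shift_of_orbit_rep:
  assumes n: "n > 0" and x: "x \<in> configs n A"
  obtains g where "x = shift n g (orbit_rep n x)"
proof -
  obtain h where "orbit_rep n x = shift n h x" using orbit_rep_mem unfolding shift_orbit_def by blast
  then have "x = shift n ((n - 1) * h) (orbit_rep n x)" using shift_cancel[OF n x] by simp
  then show ?thesis by (rule that)
qed

definition configs_of_period :: "nat \<Rightarrow> 'a set \<Rightarrow> nat \<Rightarrow> (nat \<Rightarrow> 'a) set" where
  "configs_of_period n A d = {x \<in> configs n A. period n x = d}"

definition period_reps :: "nat \<Rightarrow> 'a set \<Rightarrow> nat \<Rightarrow> (nat \<Rightarrow> 'a) set" where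
  "period_reps n A d = orbit_rep n ` configs_of_period n A d"

lemma period_repsD:
  assumes n: "n > 0" and r: "r \<in> period_reps n A d"
  shows "r \<in> configs n A" "period n r = d" "orbit_rep n r = r"
proof -
  obtain x where x: "x \<in> configs n A" "period n x = d" "r = orbit_rep n x"
    using r unfolding period_reps_def configs_of_period_def by auto
  obtain h where h: "r = shift n h x" using orbit_rep_mem x(3) unfolding shift_orbit_def by blast
  show "r \<in> configs n A" "period n r = d"
    unfolding h using shift_in_configs[OF n x(1)] period_shift[OF n x(1)] x(2) by simp_all
  show "orbit_rep n r = r" using orbit_rep_shift[OF n x(1), of h] h x(3) by metis
qed

lemma finite_period_reps: "n > 0 \<Longrightarrow> finite A \<Longrightarrow> finite (period_reps n A d)"
  using finite_configs period_repsD(1) by (meson finite_subset subsetI)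

lemma bij_betw_period_reps:
  assumes n: "n > 0"
  shows "bij_betw (\<lambda>(r, k). shift n k r) (period_reps n A d \<times> {0..<d}) (configs_of_period n A d)"
proof -
  let ?f = "\<lambda>(r, k). shift n k r"
  have inj: "inj_on ?f (period_reps n A d \<times> {0..<d})"
  proof (rule inj_onI, clarsimp)
    fix r k r' k'
    assume r: "r \<in> period_reps n A d" and r': "r' \<in> period_reps n A d" and k: "k < d" "k' < d"
      and e: "shift n k r = shift n k' r'"
    note rp = period_repsD[OF n r] and rp' = period_repsD[OF n r']
    have "r = r'" using orbit_rep_shift[OF n rp(1), of k] orbit_rep_shift[OF n rp'(1), of k'] e rp(3) rp'(3)
      by simp
    then show "r = r' \<and> k = k'" using e shift_eq_shift_iff[OF n rp(1)] rp(2) k by simp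
  qed
  have sub: "?f ` (period_reps n A d \<times> {0..<d}) \<subseteq> configs_of_period n A d"
  proof clarify
    fix r k assume "r \<in> period_reps n A d"
    note rp = period_repsD[OF n this]
    show "shift n k r \<in> configs_of_period n A d"
      using rp shift_in_configs[OF n rp(1)] period_shift[OF n rp(1)] by (simp add: configs_of_period_def)
  qed
  have sup: "configs_of_period n A d \<subseteq> ?f ` (period_reps n A d \<times> {0..<d})"
  proof
    fix x assume x: "x \<in> configs_of_period n A d"
    have xc: "x \<in> configs n A" and px: "period n x = d" using x by (auto simp: configs_of_period_def)
    have rR: "orbit_rep n x \<in> period_reps n A d" using x unfolding period_reps_def by auto
    obtain g where "x = shift n g (orbit_rep n x)" using shift_of_orbit_rep[OF n xc] .
    then have "x = shift n (g mod d) (orbit_rep n x)"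
      using shift_mod_period[OF n period_repsD(1)[OF n rR]] period_repsD(2)[OF n rR] by simp
    moreover have "g mod d < d" using period_pos[OF n xc] px by simp
    ultimately show "x \<in> ?f ` (period_reps n A d \<times> {0..<d})"
      using rR by (intro image_eqI[where x="(orbit_rep n x, g mod d)"]) auto
  qed
  show ?thesis unfolding bij_betw_def using inj subset_antisym[OF sub sup] by (rule conjI)
qed

lemma card_configs_of_period:
  assumes "n > 0"
  shows "card (configs_of_period n A d) = card (period_reps n A d) * d"
proof -
  have "card (period_reps n A d \<times> {0..<d}) = card (configs_of_period n A d)"
    by (rule bij_betw_same_card[OF bij_betw_period_reps[OF assms]])
  then show ?thesis by (simp add: card_cartesian_product)
qed

section \<open>Counting orbits of a given size\<close>

lemma shift_fixed_periodic:
  assumes n: "n > 0" and x: "x \<in> configs n A" and d: "d dvd n" and fixed: "shift n d x = x"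
    and h: "h < n"
  shows "x h = x (h mod d)"
proof -
  have "h mod d < n" using d n h by (metis dvd_imp_le le_less_trans mod_less_eq_dividend)
  moreover have "shift n (d * (h div d)) x = x" using fixed shift_eq_self_iff[OF n x] by simp
  ultimately have "x ((h mod d + d * (h div d)) mod n) = x (h mod d)"
    by (metis atLeastLessThan_iff restrict_apply' shift_def zero_le)
  then show ?thesis using h by simp
qed

lemma card_shift_fixed:
  assumes n: "n > 0" and d: "d dvd n"
  shows "card {x \<in> configs n A. shift n d x = x} = card A ^ d"
proof -
  have d0: "d > 0" and dn: "d \<le> n" using d n by (auto intro: dvd_pos_nat dvd_imp_le)
  define Q where "Q = {x \<in> configs n A. shift n d x = x}"
  define ext where "ext y = (\<lambda>h\<in>{0..<n}. y (h mod d))" for y :: "nat \<Rightarrow> 'a"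
  have periodic: "x h = x (h mod d)" if "x \<in> Q" "h < n" for x h
    using shift_fixed_periodic[OF n _ d] that by (auto simp: Q_def)
  have ext_in: "ext y \<in> Q" if y: "y \<in> {0..<d} \<rightarrow>\<^sub>E A" for y
  proof -
    have yc: "ext y \<in> configs n A" unfolding ext_def configs_def using y d0 by auto
    have "shift n d (ext y) = ext y"
    proof (rule configs_eqI[OF shift_in_configs[OF n yc] yc])
      fix h assume "h < n"
      moreover have "((h + d) mod n) mod d = (h + d) mod d" using d by (simp add: mod_mod_cancel)
      ultimately show "shift n d (ext y) h = ext y h" unfolding shift_def ext_def using n by simp
    qed
    then show ?thesis using yc by (simp add: Q_def)
  qed
  have restrict_in: "restrict x {0..<d} \<in> {0..<d} \<rightarrow>\<^sub>E A" if "x \<in> Q" for x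
    using that configs_mem dn by (fastforce simp: Q_def)
  have "bij_betw (\<lambda>x. restrict x {0..<d}) Q ({0..<d} \<rightarrow>\<^sub>E A)"
  proof (rule bij_betw_byWitness[where f'=ext])
    show "\<forall>x\<in>Q. ext (restrict x {0..<d}) = x"
    proof
      fix x assume x: "x \<in> Q"
      show "ext (restrict x {0..<d}) = x"
        using ext_in[OF restrict_in[OF x]] x periodic[OF x] d0
        by (intro configs_eqI[of _ n A]) (auto simp: Q_def ext_def)
    qed
    show "\<forall>y\<in>{0..<d} \<rightarrow>\<^sub>E A. restrict (ext y) {0..<d} = y"
      using dn unfolding ext_def by (auto intro!: PiE_ext)
    show "(\<lambda>x. restrict x {0..<d}) ` Q \<subseteq> {0..<d} \<rightarrow>\<^sub>E A" using restrict_in by blast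
    show "ext ` ({0..<d} \<rightarrow>\<^sub>E A) \<subseteq> Q" using ext_in by blast
  qed
  then have "card Q = card ({0..<d} \<rightarrow>\<^sub>E A)" by (rule bij_betw_same_card)
  also have "\<dots> = card A ^ d" by (simp add: card_PiE)
  finally show ?thesis unfolding Q_def .
qed

lemma card_power_eq_sum_period:
  assumes n: "n > 0" and A: "finite A" and d: "d dvd n"
  shows "card A ^ d = (\<Sum>b | b dvd d. card (configs_of_period n A b))"
proof -
  have "{x \<in> configs n A. shift n d x = x} = (\<Union>b\<in>{b. b dvd d}. configs_of_period n A b)"
    unfolding configs_of_period_def using shift_eq_self_iff[OF n] by auto
  moreover have "card (\<Union>b\<in>{b. b dvd d}. configs_of_period n A b)
      = (\<Sum>b | b dvd d. card (configs_of_period n A b))"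
    using d n finite_configs[OF A]
    by (intro card_UN_disjoint) (auto simp: configs_of_period_def intro: dvd_pos_nat)
  ultimately show ?thesis using card_shift_fixed[OF n d, of A] by simp
qed

lemma alpha_eq_card_period_reps:
  assumes n: "n > 0" and A: "finite A" and d: "d dvd n"
  shows "alpha d (card A) = card (period_reps n A d)"
proof -
  have d0: "d > 0" using d n by (auto intro: dvd_pos_nat)
  have "(\<Sum>b | b dvd d. moebius (d div b) * int (card A) ^ b) = int (card (configs_of_period n A d))"
  proof (rule moebius_inversion[OF d0])
    fix m assume "m dvd d"
    then have "m dvd n" using d by (rule dvd_trans)
    then show "int (card A) ^ m = (\<Sum>c | c dvd m. int (card (configs_of_period n A c)))"
      using card_power_eq_sum_period[OF n A] by (metis of_nat_power of_nat_sum)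
  qed
  also have "\<dots> = int (card (period_reps n A d)) * int d"
    by (simp add: card_configs_of_period[OF n])
  finally show ?thesis unfolding alpha_def using d0 by simp
qed

section \<open>Coordinates adapted to the shift\<close>

text \<open>\<open>(d, j, k)\<close> will address the \<open>k\<close>-th shift of the representative of the \<open>j\<close>-th orbit
  of size \<open>d\<close>.\<close>
definition orbit_coords :: "nat \<Rightarrow> nat \<Rightarrow> (nat \<times> nat \<times> nat) set" where
  "orbit_coords n q = {(d, j, k). d dvd n \<and> j \<in> {1..alpha d q} \<and> k < d}"

definition coord_shift :: "nat \<Rightarrow> nat \<times> nat \<times> nat \<Rightarrow> nat \<times> nat \<times> nat" where
  "coord_shift g = (\<lambda>(d, j, k). (d, j, (k + g) mod d))"

lemma coord_shift_apply [simp]: "coord_shift g (d, j, k) = (d, j, (k + g) mod d)"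
  by (simp add: coord_shift_def)

lemma ex_period_reps_enumeration:
  assumes n: "n > 0" and A: "finite A"
  obtains e where "\<And>d. d dvd n \<Longrightarrow> bij_betw (e d) {1..alpha d (card A)} (period_reps n A d)"
proof -
  have "\<forall>d\<in>{d. d dvd n}. \<exists>e. bij_betw e {1..alpha d (card A)} (period_reps n A d)"
  proof
    fix d assume "d \<in> {d. d dvd n}"
    then show "\<exists>e. bij_betw e {1..alpha d (card A)} (period_reps n A d)"
      using ex_bij_betw_nat_finite_1[OF finite_period_reps[OF n A, of d]]
        alpha_eq_card_period_reps[OF n A, of d] by simp
  qed
  from bchoice[OF this] show ?thesis using that by blast
qed

lemma bij_betw_orbit_coords:
  assumes n: "n > 0"
    and e: "\<And>d. d dvd n \<Longrightarrow> bij_betw (e d) {1..alpha d (card A)} (period_reps n A d)"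
  shows "bij_betw (\<lambda>(d, j, k). shift n k (e d j)) (orbit_coords n (card A)) (configs n A)"
proof -
  let ?Y = "orbit_coords n (card A)" and ?\<beta> = "\<lambda>(d, j, k). shift n k (e d j)"
  have eR: "e d j \<in> period_reps n A d" if "(d, j, k) \<in> ?Y" for d j k
  proof -
    have "d dvd n" "j \<in> {1..alpha d (card A)}" using that by (auto simp: orbit_coords_def)
    then show ?thesis using bij_betwE[OF e] by blast
  qed
  have "(d, j, k) = (d', j', k')"
    if y: "(d, j, k) \<in> ?Y" and y': "(d', j', k') \<in> ?Y" and eq: "shift n k (e d j) = shift n k' (e d' j')"
    for d j k d' j' k'
  proof -
    have "d' = d"
      using period_shift[OF n period_repsD(1)[OF n eR[OF y]]] period_repsD(2)[OF n eR[OF y]]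
        period_shift[OF n period_repsD(1)[OF n eR[OF y']]] period_repsD(2)[OF n eR[OF y']] eq by metis
    then have "(e d j, k) = (e d j', k')"
      using inj_onD[OF bij_betw_imp_inj_on[OF bij_betw_period_reps[OF n]], of "(e d j, k)" "(e d j', k')"]
        eq eR[OF y] eR[OF y'] y y' by (auto simp: orbit_coords_def)
    moreover have "d dvd n" "j \<in> {1..alpha d (card A)}" "j' \<in> {1..alpha d (card A)}"
      using y y' \<open>d' = d\<close> by (auto simp: orbit_coords_def)
    ultimately show "(d, j, k) = (d', j', k')"
      using inj_onD[OF bij_betw_imp_inj_on[OF e]] \<open>d' = d\<close> by auto
  qed
  then have "inj_on ?\<beta> ?Y" unfolding inj_on_def by (metis (no_types, lifting) case_prod_conv prod_cases3)
  moreover have "?\<beta> ` ?Y = configs n A"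
  proof (rule subset_antisym; clarify)
    fix d j k assume "(d, j, k) \<in> ?Y"
    then show "shift n k (e d j) \<in> configs n A"
      using shift_in_configs[OF n period_repsD(1)[OF n eR]] by simp
  next
    fix x assume x: "x \<in> configs n A"
    define d where "d = period n x"
    have dn: "d dvd n" using period_dvd[OF n x] d_def by simp
    have "x \<in> configs_of_period n A d" using x d_def by (simp add: configs_of_period_def)
    then obtain r k where rk: "r \<in> period_reps n A d" "k < d" "x = shift n k r"
      using bij_betw_imp_surj_on[OF bij_betw_period_reps[OF n]] by fastforce
    obtain j where "j \<in> {1..alpha d (card A)}" "r = e d j"
      using bij_betw_imp_surj_on[OF e[OF dn]] rk(1) by (metis imageE)
    then show "x \<in> ?\<beta> ` ?Y"
      using dn rk by (intro image_eqI[where x="(d, j, k)"]) (auto simp: orbit_coords_def)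
  qed
  ultimately show ?thesis unfolding bij_betw_def ..
qed

lemma exists_equivariant_coords:
  assumes n: "n > 0" and A: "finite A"
  obtains \<beta> where "bij_betw \<beta> (orbit_coords n (card A)) (configs n A)"
    and "\<And>y g. y \<in> orbit_coords n (card A) \<Longrightarrow> shift n g (\<beta> y) = \<beta> (coord_shift g y)"
proof -
  obtain e where e: "\<And>d. d dvd n \<Longrightarrow> bij_betw (e d) {1..alpha d (card A)} (period_reps n A d)"
    using ex_period_reps_enumeration[OF n A] by blast
  define \<beta> where "\<beta> = (\<lambda>(d, j, k). shift n k (e d j))"
  have "shift n g (\<beta> y) = \<beta> (coord_shift g y)" if "y \<in> orbit_coords n (card A)" for y g
  proof -
    obtain d j k where y: "y = (d, j, k)" by (metis prod_cases3)
    then have r: "e d j \<in> period_reps n A d"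
      using that bij_betwE[OF e] by (auto simp: orbit_coords_def)
    show ?thesis
      using shift_mod_period[OF n period_repsD(1)[OF n r], of "k + g"] period_repsD(2)[OF n r]
      by (simp add: y \<beta>_def shift_shift[OF n])
  qed
  then show ?thesis using that bij_betw_orbit_coords[OF n e] unfolding \<beta>_def by blast
qed

section \<open>Cellular automata as shift-equivariant maps\<close>

definition shift_equivariant :: "nat \<Rightarrow> 'a set \<Rightarrow> ((nat \<Rightarrow> 'a) \<Rightarrow> (nat \<Rightarrow> 'a)) \<Rightarrow> bool" where
  "shift_equivariant n A \<tau> \<longleftrightarrow> (\<forall>x\<in>configs n A. \<forall>g. shift n g (\<tau> x) = \<tau> (shift n g x))"

lemma is_CA_shift_equivariant:
  assumes n: "n > 0" and ca: "is_CA n A \<tau>"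
  shows "shift_equivariant n A \<tau>"
  unfolding shift_equivariant_def
proof (intro ballI allI)
  fix x g assume x: "x \<in> configs n A"
  have t: "\<tau> \<in> configs n A \<rightarrow>\<^sub>E configs n A" using ca unfolding is_CA_def by simp
  obtain S \<mu> where
    eq: "\<forall>x\<in>configs n A. \<forall>g\<in>{0..<n}. \<tau> x g = \<mu> (restrict (\<lambda>h. x ((h + g) mod n)) S)"
    using ca unfolding is_CA_def by blast
  have sx: "shift n g x \<in> configs n A" using shift_in_configs[OF n x] .
  show "shift n g (\<tau> x) = \<tau> (shift n g x)"
  proof (rule configs_eqI[OF shift_in_configs[OF n]])
    fix h assume h: "h < n"
    have "shift n g (\<tau> x) h = \<mu> (restrict (\<lambda>i. x ((i + (h + g) mod n) mod n)) S)"
      using eq x n h by (simp add: shift_def)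
    also have "(\<lambda>i. x ((i + (h + g) mod n) mod n)) = (\<lambda>i. shift n g x ((i + h) mod n))"
      unfolding shift_def using n by (auto simp: fun_eq_iff mod_add_left_eq mod_add_right_eq add.assoc)
    also have "\<mu> (restrict (\<lambda>i. shift n g x ((i + h) mod n)) S) = \<tau> (shift n g x) h"
      using eq sx h by simp
    finally show "shift n g (\<tau> x) h = \<tau> (shift n g x) h" .
  qed (use t x sx in auto)
qed

text \<open>Conversely, the whole of \<open>{0..<n}\<close> can serve as the neighbourhood \<open>S\<close>.\<close>
lemma shift_equivariant_is_CA:
  assumes n: "n > 0" and t: "\<tau> \<in> configs n A \<rightarrow>\<^sub>E configs n A" and eqv: "shift_equivariant n A \<tau>"
  shows "is_CA n A \<tau>"
proof -
  have "(\<lambda>y. \<tau> y 0) \<in> ({0..<n} \<rightarrow>\<^sub>E A) \<rightarrow> A"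
    using t n configs_mem unfolding configs_def by fastforce
  moreover have "\<tau> x g = \<tau> (restrict (\<lambda>h. x ((h + g) mod n)) {0..<n}) 0"
    if "x \<in> configs n A" "g \<in> {0..<n}" for x g
  proof -
    have "\<tau> x g = shift n g (\<tau> x) 0" using n that(2) by (simp add: shift_def)
    also have "\<dots> = \<tau> (shift n g x) 0" using eqv that(1) by (simp add: shift_equivariant_def)
    finally show ?thesis by (simp add: shift_def)
  qed
  ultimately show ?thesis unfolding is_CA_def using t by blast
qed

lemma CA_monoid_mult: "\<tau> \<otimes>\<^bsub>CA_monoid n A\<^esub> \<sigma> = (\<lambda>x\<in>configs n A. \<sigma> (\<tau> x))"
  by (simp add: CA_monoid_def)

lemma CA_monoid_one: "\<one>\<^bsub>CA_monoid n A\<^esub> = (\<lambda>x\<in>configs n A. x)"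
  by (simp add: CA_monoid_def)

lemma CA_unitD:
  assumes n: "n > 0" and "\<tau> \<in> Units (CA_monoid n A)"
  shows "\<tau> \<in> configs n A \<rightarrow>\<^sub>E configs n A" "shift_equivariant n A \<tau>"
proof -
  have "is_CA n A \<tau>" using assms(2) unfolding Units_def by (simp add: CA_monoid_def)
  then show "\<tau> \<in> configs n A \<rightarrow>\<^sub>E configs n A" "shift_equivariant n A \<tau>"
    using is_CA_shift_equivariant[OF n] unfolding is_CA_def by auto
qed

lemma CA_unitE:
  assumes "\<tau> \<in> Units (CA_monoid n A)"
  obtains \<tau>' where "\<tau>' \<in> Units (CA_monoid n A)"
    and "\<And>x. x \<in> configs n A \<Longrightarrow> \<tau>' (\<tau> x) = x" and "\<And>x. x \<in> configs n A \<Longrightarrow> \<tau> (\<tau>' x) = x"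
proof -
  obtain \<tau>' where "\<tau>' \<in> carrier (CA_monoid n A)"
    and inv: "\<tau>' \<otimes>\<^bsub>CA_monoid n A\<^esub> \<tau> = \<one>\<^bsub>CA_monoid n A\<^esub>" "\<tau> \<otimes>\<^bsub>CA_monoid n A\<^esub> \<tau>' = \<one>\<^bsub>CA_monoid n A\<^esub>"
    using assms unfolding Units_def by auto
  then have "\<tau>' \<in> Units (CA_monoid n A)" using assms unfolding Units_def by auto
  moreover have "\<tau>' (\<tau> x) = x" "\<tau> (\<tau>' x) = x" if "x \<in> configs n A" for x
    using inv that unfolding CA_monoid_mult CA_monoid_one by (metis restrict_apply')+
  ultimately show ?thesis using that by blast
qed

lemma bij_CA_in_Units:
  assumes n: "n > 0" and ca: "is_CA n A \<tau>" and bij: "bij_betw \<tau> (configs n A) (configs n A)"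
  shows "\<tau> \<in> Units (CA_monoid n A)"
proof -
  define \<tau>' where "\<tau>' = (\<lambda>y\<in>configs n A. inv_into (configs n A) \<tau> y)"
  have t: "\<tau> \<in> configs n A \<rightarrow>\<^sub>E configs n A" using ca unfolding is_CA_def by simp
  have t': "\<tau>' \<in> configs n A \<rightarrow>\<^sub>E configs n A"
    unfolding \<tau>'_def using bij_betwE[OF bij_betw_inv_into[OF bij]] by auto
  have right: "\<tau> (\<tau>' y) = y" if "y \<in> configs n A" for y
    unfolding \<tau>'_def using bij that by (simp add: bij_betw_inv_into_right)
  have left: "\<tau>' (\<tau> x) = x" if "x \<in> configs n A" for x
    unfolding \<tau>'_def using bij that bij_betwE[OF bij] by (simp add: bij_betw_inv_into_left)
  have "shift_equivariant n A \<tau>'"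
    unfolding shift_equivariant_def
  proof (intro ballI allI)
    fix y g assume y: "y \<in> configs n A"
    have "\<tau>' y \<in> configs n A" using t' y by auto
    then have "\<tau> (shift n g (\<tau>' y)) = shift n g (\<tau> (\<tau>' y))"
      using is_CA_shift_equivariant[OF n ca] by (simp add: shift_equivariant_def)
    then have "\<tau> (shift n g (\<tau>' y)) = shift n g y" using right[OF y] by simp
    then show "shift n g (\<tau>' y) = \<tau>' (shift n g y)"
      using left[OF shift_in_configs[OF n]] t' y by (metis PiE_mem)
  qed
  then have "is_CA n A \<tau>'" using shift_equivariant_is_CA[OF n t'] by blast
  moreover have "\<tau>' \<otimes>\<^bsub>CA_monoid n A\<^esub> \<tau> = \<one>\<^bsub>CA_monoid n A\<^esub>" "\<tau> \<otimes>\<^bsub>CA_monoid n A\<^esub> \<tau>' = \<one>\<^bsub>CA_monoid n A\<^esub>"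
    unfolding CA_monoid_mult CA_monoid_one using left right by (auto intro: restrict_ext)
  ultimately show ?thesis unfolding Units_def using ca by (auto simp: CA_monoid_def)
qed

lemma period_dvd_if_shift_equivariant:
  assumes n: "n > 0" and x: "x \<in> configs n A" and tx: "\<tau> x \<in> configs n A"
    and eqv: "shift_equivariant n A \<tau>"
  shows "period n (\<tau> x) dvd period n x"
proof -
  have "shift n (period n x) (\<tau> x) = \<tau> x"
    using eqv x shift_period[OF n x] by (simp add: shift_equivariant_def)
  then show ?thesis using shift_eq_self_iff[OF n tx] by simp
qed

lemma period_CA_unit:
  assumes n: "n > 0" and t: "\<tau> \<in> Units (CA_monoid n A)" and x: "x \<in> configs n A"
  shows "period n (\<tau> x) = period n x"
proof -
  obtain \<tau>' where t': "\<tau>' \<in> Units (CA_monoid n A)" and left: "\<tau>' (\<tau> x) = x"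
    using CA_unitE[OF t] x by metis
  have tx: "\<tau> x \<in> configs n A" using CA_unitD(1)[OF n t] x by auto
  have "period n (\<tau> x) dvd period n x"
    by (rule period_dvd_if_shift_equivariant[OF n x tx CA_unitD(2)[OF n t]])
  moreover have "period n x dvd period n (\<tau> x)"
    using period_dvd_if_shift_equivariant[OF n tx _ CA_unitD(2)[OF n t']] left x by simp
  ultimately show ?thesis by (rule dvd_antisym)
qed

lemma wreath_carrier: "carrier (wreath d a) = ({1..a} \<rightarrow>\<^sub>E {0..<d}) \<times> {\<phi>. \<phi> permutes {1..a}}"
  by (simp add: wreath_def)

lemma wreath_mult: "(v, \<phi>) \<otimes>\<^bsub>wreath d a\<^esub> (w, \<psi>) =
   ((\<lambda>i\<in>{1..a}. (v i + w (Hilbert_Choice.inv \<phi> i)) mod d), \<phi> \<circ> \<psi>)"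
  by (simp add: wreath_def)

locale equivariant_coords =
  fixes n :: nat and A :: "'a set" and \<beta> :: "nat \<times> nat \<times> nat \<Rightarrow> nat \<Rightarrow> 'a"
  assumes n_pos: "n > 0"
    and \<beta>_bij: "bij_betw \<beta> (orbit_coords n (card A)) (configs n A)"
    and shift_\<beta>: "\<And>y g. y \<in> orbit_coords n (card A) \<Longrightarrow> shift n g (\<beta> y) = \<beta> (coord_shift g y)"
begin

abbreviation coords where "coords \<equiv> orbit_coords n (card A)"
abbreviation labels where "labels d \<equiv> {1..alpha d (card A)}"
abbreviation CA where "CA \<equiv> CA_monoid n A"

lemma coords_iff [simp]: "(d, j, k) \<in> coords \<longleftrightarrow> d dvd n \<and> j \<in> labels d \<and> k < d"
  by (simp add: orbit_coords_def)

lemma divisor_pos: "d dvd n \<Longrightarrow> d > 0"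
  using n_pos by (auto intro: dvd_pos_nat)

lemma finite_coords: "finite coords"
proof -
  have "coords = (SIGMA d:{d. d dvd n}. labels d \<times> {0..<d})" by auto
  then show ?thesis using n_pos by simp
qed

definition coord :: "(nat \<Rightarrow> 'a) \<Rightarrow> nat \<times> nat \<times> nat" where
  "coord = inv_into coords \<beta>"

lemma \<beta>_in: "y \<in> coords \<Longrightarrow> \<beta> y \<in> configs n A"
  using \<beta>_bij bij_betwE by blast

lemma coord_in: "x \<in> configs n A \<Longrightarrow> coord x \<in> coords"
  unfolding coord_def using bij_betwE[OF bij_betw_inv_into[OF \<beta>_bij]] by blast

lemma \<beta>_coord: "x \<in> configs n A \<Longrightarrow> \<beta> (coord x) = x"
  unfolding coord_def using \<beta>_bij by (simp add: bij_betw_inv_into_right)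

lemma coord_\<beta>: "y \<in> coords \<Longrightarrow> coord (\<beta> y) = y"
  unfolding coord_def using \<beta>_bij by (simp add: bij_betw_inv_into_left)

lemma coord_shift_in_coords: "y \<in> coords \<Longrightarrow> coord_shift g y \<in> coords"
  by (cases y) (simp add: divisor_pos)

lemma coord_shift_coord: "x \<in> configs n A \<Longrightarrow> coord (shift n g x) = coord_shift g (coord x)"
  using shift_\<beta>[OF coord_in, of x g] \<beta>_coord[of x] coord_\<beta>[OF coord_shift_in_coords[OF coord_in]] by simp

lemma \<beta>_eq_shift_base: "(d, j, k) \<in> coords \<Longrightarrow> \<beta> (d, j, k) = shift n k (\<beta> (d, j, 0))"
  using shift_\<beta>[of "(d, j, 0)" k] divisor_pos by simp

lemma period_\<beta>:
  assumes y: "(d, j, k) \<in> coords"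
  shows "period n (\<beta> (d, j, k)) = d"
proof -
  have "shift n g (\<beta> (d, j, k)) = \<beta> (d, j, k) \<longleftrightarrow> d dvd g" for g
  proof -
    have "(d, j, (k + g) mod d) \<in> coords" using y divisor_pos by simp
    then have "\<beta> (d, j, (k + g) mod d) = \<beta> (d, j, k) \<longleftrightarrow> (k + g) mod d = k mod d"
      using y coord_\<beta> by (metis mod_less coords_iff prod.inject)
    then show ?thesis using shift_\<beta>[OF y] by (simp add: mod_eq_dvd_iff_nat)
  qed
  then show ?thesis using shift_eq_self_iff[OF n_pos \<beta>_in[OF y]] by (metis dvd_antisym dvd_refl)
qed

text \<open>A unit maps the base point \<open>\<beta> (d, j, 0)\<close> of the \<open>j\<close>-th orbit of size \<open>d\<close> to the
  \<open>orbit_offset\<close>-th shift of the base point of the \<open>orbit_perm\<close>-th orbit of the same size.\<close>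
definition base_image :: "((nat \<Rightarrow> 'a) \<Rightarrow> (nat \<Rightarrow> 'a)) \<Rightarrow> nat \<Rightarrow> nat \<Rightarrow> nat \<times> nat \<times> nat" where
  "base_image \<tau> d j = coord (\<tau> (\<beta> (d, j, 0)))"

definition orbit_perm :: "((nat \<Rightarrow> 'a) \<Rightarrow> (nat \<Rightarrow> 'a)) \<Rightarrow> nat \<Rightarrow> nat \<Rightarrow> nat" where
  "orbit_perm \<tau> d j = (if j \<in> labels d then fst (snd (base_image \<tau> d j)) else j)"

lemma orbit_perm_outside: "j \<notin> labels d \<Longrightarrow> orbit_perm \<tau> d j = j"
  unfolding orbit_perm_def by (rule if_not_P)

definition orbit_offset :: "((nat \<Rightarrow> 'a) \<Rightarrow> (nat \<Rightarrow> 'a)) \<Rightarrow> nat \<Rightarrow> nat \<Rightarrow> nat" where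
  "orbit_offset \<tau> d = (\<lambda>j\<in>labels d. snd (snd (base_image \<tau> d j)))"

lemma base_image_CA_unit:
  assumes t: "\<tau> \<in> Units CA" and d: "d dvd n" and j: "j \<in> labels d"
  shows "base_image \<tau> d j = (d, orbit_perm \<tau> d j, orbit_offset \<tau> d j)"
    and "\<beta> (base_image \<tau> d j) = \<tau> (\<beta> (d, j, 0))"
    and "orbit_perm \<tau> d j \<in> labels d" and "orbit_offset \<tau> d j < d"
proof -
  have y: "(d, j, 0) \<in> coords" using d j divisor_pos by simp
  have tx: "\<tau> (\<beta> (d, j, 0)) \<in> configs n A" using CA_unitD(1)[OF n_pos t] \<beta>_in[OF y] by auto
  show b: "\<beta> (base_image \<tau> d j) = \<tau> (\<beta> (d, j, 0))"
    unfolding base_image_def using \<beta>_coord[OF tx] .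
  obtain d' j' k' where b': "base_image \<tau> d j = (d', j', k')" by (metis prod_cases3)
  have in_coords: "(d', j', k') \<in> coords" using coord_in[OF tx] b' by (simp add: base_image_def)
  have "d' = d"
    using period_\<beta>[OF in_coords] b b' period_CA_unit[OF n_pos t \<beta>_in[OF y]] period_\<beta>[OF y] by simp
  then show "base_image \<tau> d j = (d, orbit_perm \<tau> d j, orbit_offset \<tau> d j)"
    "orbit_perm \<tau> d j \<in> labels d" "orbit_offset \<tau> d j < d"
    using b' in_coords j by (simp_all add: orbit_perm_def orbit_offset_def)
qed

lemma base_image_mult:
  assumes t: "\<tau> \<in> Units CA" and s: "\<sigma> \<in> Units CA" and d: "d dvd n" and j: "j \<in> labels d"
  shows "base_image (\<tau> \<otimes>\<^bsub>CA\<^esub> \<sigma>) d j = (d, orbit_perm \<sigma> d (orbit_perm \<tau> d j),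
           (orbit_offset \<tau> d j + orbit_offset \<sigma> d (orbit_perm \<tau> d j)) mod d)"
proof -
  define j1 k1 where "j1 = orbit_perm \<tau> d j" and "k1 = orbit_offset \<tau> d j"
  note t1 = base_image_CA_unit[OF t d j, folded j1_def k1_def]
  note s1 = base_image_CA_unit[OF s d t1(3)]
  have y: "(d, j, 0) \<in> coords" and y1: "(d, j1, k1) \<in> coords" and y10: "(d, j1, 0) \<in> coords"
    using d j t1 divisor_pos by auto
  have "(\<tau> \<otimes>\<^bsub>CA\<^esub> \<sigma>) (\<beta> (d, j, 0)) = \<sigma> (\<beta> (d, j1, k1))"
    using \<beta>_in[OF y] t1(1,2) by (simp add: CA_monoid_mult)
  also have "\<dots> = shift n k1 (\<sigma> (\<beta> (d, j1, 0)))"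
    using \<beta>_eq_shift_base[OF y1] CA_unitD(2)[OF n_pos s] \<beta>_in[OF y10]
    by (simp add: shift_equivariant_def)
  also have "\<dots> = \<beta> (coord_shift k1 (base_image \<sigma> d j1))"
    using s1(2) shift_\<beta> coord_in CA_unitD(1)[OF n_pos s] \<beta>_in[OF y10]
    by (metis PiE_mem base_image_def)
  finally show ?thesis
    unfolding base_image_def[of "\<tau> \<otimes>\<^bsub>CA\<^esub> \<sigma>"] using s1(1,3,4) j1_def k1_def d divisor_pos[OF d]
    by (simp add: coord_\<beta> add.commute)
qed

lemma orbit_perm_mult:
  assumes "\<tau> \<in> Units CA" "\<sigma> \<in> Units CA" "d dvd n"
  shows "orbit_perm (\<tau> \<otimes>\<^bsub>CA\<^esub> \<sigma>) d = orbit_perm \<sigma> d \<circ> orbit_perm \<tau> d"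
proof
  fix j show "orbit_perm (\<tau> \<otimes>\<^bsub>CA\<^esub> \<sigma>) d j = (orbit_perm \<sigma> d \<circ> orbit_perm \<tau> d) j"
  proof (cases "j \<in> labels d")
    case True
    then show ?thesis using base_image_mult[OF assms True] by (simp add: orbit_perm_def[of "\<tau> \<otimes>\<^bsub>CA\<^esub> \<sigma>"])
  qed (simp add: orbit_perm_outside)
qed

lemma orbit_offset_mult:
  assumes "\<tau> \<in> Units CA" "\<sigma> \<in> Units CA" "d dvd n"
  shows "orbit_offset (\<tau> \<otimes>\<^bsub>CA\<^esub> \<sigma>) d
           = (\<lambda>j\<in>labels d. (orbit_offset \<tau> d j + orbit_offset \<sigma> d (orbit_perm \<tau> d j)) mod d)"
  unfolding orbit_offset_def[of "\<tau> \<otimes>\<^bsub>CA\<^esub> \<sigma>"] using base_image_mult[OF assms]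
  by (intro restrict_ext) simp

lemma orbit_perm_permutes:
  assumes t: "\<tau> \<in> Units CA" and d: "d dvd n"
  shows "orbit_perm \<tau> d permutes labels d"
proof (rule bij_imp_permutes)
  obtain \<tau>' where t': "\<tau>' \<in> Units CA"
    and inv: "\<And>x. x \<in> configs n A \<Longrightarrow> \<tau>' (\<tau> x) = x" "\<And>x. x \<in> configs n A \<Longrightarrow> \<tau> (\<tau>' x) = x"
    using CA_unitE[OF t] by blast
  have "base_image (\<tau> \<otimes>\<^bsub>CA\<^esub> \<tau>') d j = (d, j, 0)" "base_image (\<tau>' \<otimes>\<^bsub>CA\<^esub> \<tau>) d j = (d, j, 0)"
    if "j \<in> labels d" for j
    using that d divisor_pos[OF d] \<beta>_in inv coord_\<beta> by (simp_all add: base_image_def CA_monoid_mult)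
  then have "orbit_perm \<tau>' d (orbit_perm \<tau> d j) = j" "orbit_perm \<tau> d (orbit_perm \<tau>' d j) = j"
    if "j \<in> labels d" for j
    using base_image_mult[OF t t' d that] base_image_mult[OF t' t d that] that by simp_all
  then show "bij_betw (orbit_perm \<tau> d) (labels d) (labels d)"
    using base_image_CA_unit(3)[OF t d] base_image_CA_unit(3)[OF t' d]
    by (intro bij_betw_byWitness[where f'="orbit_perm \<tau>' d"]) auto
qed (rule orbit_perm_outside)

lemma CA_unit_eqI:
  assumes t: "\<tau> \<in> Units CA" and s: "\<sigma> \<in> Units CA"
    and eq: "\<And>d j. d dvd n \<Longrightarrow> j \<in> labels d \<Longrightarrow> base_image \<tau> d j = base_image \<sigma> d j"
  shows "\<tau> = \<sigma>"
proof (rule PiE_ext[OF CA_unitD(1)[OF n_pos t] CA_unitD(1)[OF n_pos s]])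
  fix x assume x: "x \<in> configs n A"
  obtain d j k where y: "coord x = (d, j, k)" by (metis prod_cases3)
  then have yc: "(d, j, k) \<in> coords" using coord_in[OF x] by simp
  then have y0: "(d, j, 0) \<in> coords" using divisor_pos by simp
  have x_eq: "x = shift n k (\<beta> (d, j, 0))" using \<beta>_coord[OF x] y \<beta>_eq_shift_base[OF yc] by simp
  have "\<tau> (\<beta> (d, j, 0)) = \<sigma> (\<beta> (d, j, 0))"
    using base_image_CA_unit(2)[OF t] base_image_CA_unit(2)[OF s] eq yc by (metis coords_iff)
  then show "\<tau> x = \<sigma> x"
    using x_eq CA_unitD(2)[OF n_pos t] CA_unitD(2)[OF n_pos s] \<beta>_in[OF y0]
    by (metis shift_equivariant_def)
qed

lemma coords_perm_CA_unit:
  assumes f: "bij_betw f coords coords"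
    and f_shift: "\<And>y g. y \<in> coords \<Longrightarrow> f (coord_shift g y) = coord_shift g (f y)"
  defines "\<tau> \<equiv> \<lambda>x\<in>configs n A. \<beta> (f (coord x))"
  shows "\<tau> \<in> Units CA" and "\<And>d j. (d, j, 0) \<in> coords \<Longrightarrow> base_image \<tau> d j = f (d, j, 0)"
proof -
  have f_in: "f y \<in> coords" if "y \<in> coords" for y using f that bij_betwE by blast
  have t: "\<tau> \<in> configs n A \<rightarrow>\<^sub>E configs n A" unfolding \<tau>_def using \<beta>_in f_in coord_in by auto
  have "bij_betw (\<beta> \<circ> f \<circ> coord) (configs n A) (configs n A)"
    unfolding coord_def using bij_betw_trans[OF bij_betw_trans[OF bij_betw_inv_into[OF \<beta>_bij] f] \<beta>_bij]
    by (simp add: comp_assoc)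
  then have bij: "bij_betw \<tau> (configs n A) (configs n A)"
    unfolding \<tau>_def by (rule bij_betw_cong[THEN iffD1, rotated]) simp
  have "shift_equivariant n A \<tau>"
    unfolding shift_equivariant_def
  proof (intro ballI allI)
    fix x g assume x: "x \<in> configs n A"
    show "shift n g (\<tau> x) = \<tau> (shift n g x)"
      using x shift_in_configs[OF n_pos x] shift_\<beta> f_in coord_in f_shift coord_shift_coord
      by (simp add: \<tau>_def)
  qed
  then show "\<tau> \<in> Units CA"
    using bij_CA_in_Units[OF n_pos shift_equivariant_is_CA[OF n_pos t] bij] by blast
  show "base_image \<tau> d j = f (d, j, 0)" if "(d, j, 0) \<in> coords" for d j
    using that \<beta>_in coord_\<beta> f_in by (simp add: base_image_def \<tau>_def)
qed

end

section \<open>The isomorphism with the wreath products\<close>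

context equivariant_coords
begin

lemma affine_coords_CA_unit:
  assumes \<psi>: "\<And>d. d dvd n \<Longrightarrow> \<psi> d permutes labels d"
    and w: "\<And>d j. d dvd n \<Longrightarrow> j \<in> labels d \<Longrightarrow> w d j < d"
  obtains \<tau> where "\<tau> \<in> Units CA"
    and "\<And>d j. d dvd n \<Longrightarrow> j \<in> labels d \<Longrightarrow> base_image \<tau> d j = (d, \<psi> d j, w d j)"
proof -
  define f where "f = (\<lambda>(d, j, k). (d, \<psi> d j, (k + w d j) mod d))"
  have f_in: "f (d, j, k) \<in> coords" if "(d, j, k) \<in> coords" for d j k
    using that permutes_in_image[OF \<psi>] divisor_pos by (simp add: f_def)
  have "(d, j, k) = (d', j', k')"
    if "(d, j, k) \<in> coords" "(d', j', k') \<in> coords" "f (d, j, k) = f (d', j', k')" for d j k d' j' k'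
  proof -
    have "d' = d" "\<psi> d j = \<psi> d j'" using that(3) by (auto simp: f_def)
    then have "j = j'" using permutes_inj[OF \<psi>] that(1) by (auto simp: inj_def)
    then have "(k + w d j) mod d = (k' + w d j) mod d" using that(3) \<open>d' = d\<close> by (simp add: f_def)
    then have "k = k'" using that \<open>d' = d\<close> by (simp add: mod_add_right_cancel_nat)
    then show ?thesis using \<open>d' = d\<close> \<open>j = j'\<close> by simp
  qed
  then have "inj_on f coords" unfolding inj_on_def by (metis prod_cases3)
  moreover have "f ` coords \<subseteq> coords" using f_in by auto
  ultimately have bij: "bij_betw f coords coords"
    using endo_inj_surj[OF finite_coords] unfolding bij_betw_def by blast
  have "f (coord_shift g y) = coord_shift g (f y)" for y g
    by (cases y) (simp add: f_def mod_add_left_eq mod_add_right_eq ac_simps)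
  note unit = coords_perm_CA_unit[OF bij this]
  show ?thesis
  proof (rule that[OF unit(1)])
    fix d j assume "d dvd n" "j \<in> labels d"
    then show "base_image (\<lambda>x\<in>configs n A. \<beta> (f (coord x))) d j = (d, \<psi> d j, w d j)"
      using unit(2)[of d j] w divisor_pos by (simp add: f_def)
  qed
qed

text \<open>\<open>CA\<close> composes its elements left to right, while \<open>wreath\<close> and \<open>sym_group\<close> compose
  permutations as functions; inverting the orbit permutations reconciles the two.\<close>
definition to_wreath where
  "to_wreath \<tau> = ((\<lambda>d\<in>{d. d dvd n \<and> d \<noteq> 1}. (orbit_offset \<tau> d, Hilbert_Choice.inv (orbit_perm \<tau> d))),
                  Hilbert_Choice.inv (orbit_perm \<tau> 1))"

abbreviation wreaths where
  "wreaths \<equiv> product_group {d. d dvd n \<and> d \<noteq> 1} (\<lambda>d. wreath d (alpha d (card A))) \<times>\<times> sym_group (card A)"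

lemma to_wreath_in_carrier:
  assumes t: "\<tau> \<in> Units CA"
  shows "to_wreath \<tau> \<in> carrier wreaths"
proof -
  have "(orbit_offset \<tau> d, Hilbert_Choice.inv (orbit_perm \<tau> d)) \<in> carrier (wreath d (alpha d (card A)))"
    if d: "d dvd n" for d
    using base_image_CA_unit(4)[OF t d] permutes_inv[OF orbit_perm_permutes[OF t d]]
    by (auto simp: wreath_carrier orbit_offset_def)
  moreover have "Hilbert_Choice.inv (orbit_perm \<tau> 1) permutes {1..card A}"
    using permutes_inv[OF orbit_perm_permutes[OF t one_dvd]] by (simp only: alpha_1)
  ultimately show ?thesis by (auto simp: to_wreath_def sym_group_carrier)
qed

lemma to_wreath_mult:
  assumes t: "\<tau> \<in> Units CA" and s: "\<sigma> \<in> Units CA"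
  shows "to_wreath (\<tau> \<otimes>\<^bsub>CA\<^esub> \<sigma>) = to_wreath \<tau> \<otimes>\<^bsub>wreaths\<^esub> to_wreath \<sigma>"
proof -
  have bij: "bij (orbit_perm \<tau> d)" "bij (orbit_perm \<sigma> d)" if "d dvd n" for d
    using permutes_bij orbit_perm_permutes t s that by blast+
  have inv_mult: "Hilbert_Choice.inv (orbit_perm (\<tau> \<otimes>\<^bsub>CA\<^esub> \<sigma>) d)
      = Hilbert_Choice.inv (orbit_perm \<tau> d) \<circ> Hilbert_Choice.inv (orbit_perm \<sigma> d)" if d: "d dvd n" for d
    using orbit_perm_mult[OF t s d] o_inv_distrib[OF bij(2)[OF d] bij(1)[OF d]] by simp
  have "(orbit_offset (\<tau> \<otimes>\<^bsub>CA\<^esub> \<sigma>) d, Hilbert_Choice.inv (orbit_perm (\<tau> \<otimes>\<^bsub>CA\<^esub> \<sigma>) d))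
     = (orbit_offset \<tau> d, Hilbert_Choice.inv (orbit_perm \<tau> d)) \<otimes>\<^bsub>wreath d (alpha d (card A))\<^esub>
       (orbit_offset \<sigma> d, Hilbert_Choice.inv (orbit_perm \<sigma> d))" if d: "d dvd n" for d
    unfolding wreath_mult orbit_offset_mult[OF t s d] inv_mult[OF d] inv_inv_eq[OF bij(1)[OF d]] by simp
  then show ?thesis using inv_mult[of 1] by (auto simp: to_wreath_def sym_group_mult intro!: restrict_ext)
qed

lemma inj_on_to_wreath: "inj_on to_wreath (Units CA)"
proof (rule inj_onI)
  fix \<tau> \<sigma> assume t: "\<tau> \<in> Units CA" and s: "\<sigma> \<in> Units CA" and eq: "to_wreath \<tau> = to_wreath \<sigma>"
  have "orbit_perm \<tau> d = orbit_perm \<sigma> d \<and> (d \<noteq> 1 \<longrightarrow> orbit_offset \<tau> d = orbit_offset \<sigma> d)"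
    if d: "d dvd n" for d
  proof -
    have "Hilbert_Choice.inv (orbit_perm \<tau> d) = Hilbert_Choice.inv (orbit_perm \<sigma> d) \<and>
          (d \<noteq> 1 \<longrightarrow> orbit_offset \<tau> d = orbit_offset \<sigma> d)"
      using eq d unfolding to_wreath_def by (cases "d = 1") (auto dest: fun_cong[of _ _ d])
    then show ?thesis
      using permutes_bij[OF orbit_perm_permutes[OF t d]] permutes_bij[OF orbit_perm_permutes[OF s d]]
      by (metis inv_inv_eq)
  qed
  moreover have "orbit_offset \<tau> 1 j = orbit_offset \<sigma> 1 j" if "j \<in> labels 1" for j
    using base_image_CA_unit(4)[OF t _ that] base_image_CA_unit(4)[OF s _ that] by simp
  ultimately show "\<tau> = \<sigma>"
    using base_image_CA_unit(1)[OF t] base_image_CA_unit(1)[OF s]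
    by (intro CA_unit_eqI[OF t s]) (metis one_dvd)
qed

lemma to_wreath_eqI:
  assumes t: "\<tau> \<in> Units CA" and \<phi>: "\<And>d. d dvd n \<Longrightarrow> \<phi> d permutes labels d"
    and b: "\<And>d j. d dvd n \<Longrightarrow> j \<in> labels d \<Longrightarrow> base_image \<tau> d j = (d, Hilbert_Choice.inv (\<phi> d) j, w d j)"
  shows "to_wreath \<tau> = ((\<lambda>d\<in>{d. d dvd n \<and> d \<noteq> 1}. (restrict (w d) (labels d), \<phi> d)), \<phi> 1)"
proof -
  have perm: "orbit_perm \<tau> d = Hilbert_Choice.inv (\<phi> d)" if "d dvd n" for d
  proof
    fix j show "orbit_perm \<tau> d j = Hilbert_Choice.inv (\<phi> d) j"
      using b[OF that] base_image_CA_unit(1)[OF t that] orbit_perm_outside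
        permutes_not_in[OF permutes_inv[OF \<phi>[OF that]]] by (cases "j \<in> labels d") auto
  qed
  have "Hilbert_Choice.inv (orbit_perm \<tau> d) = \<phi> d" if "d dvd n" for d
    using perm[OF that] inv_inv_eq[OF permutes_bij[OF \<phi>[OF that]]] by simp
  moreover have "orbit_offset \<tau> d = restrict (w d) (labels d)" if "d dvd n" for d
    unfolding orbit_offset_def using b[OF that] by (intro restrict_ext) simp
  ultimately show ?thesis unfolding to_wreath_def by (auto intro!: restrict_ext)
qed

lemma to_wreath_surj: "to_wreath ` Units CA = carrier wreaths"
proof
  show "to_wreath ` Units CA \<subseteq> carrier wreaths" using to_wreath_in_carrier by blast
next
  show "carrier wreaths \<subseteq> to_wreath ` Units CA"
  proof
    fix z assume "z \<in> carrier wreaths"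
    then obtain W \<pi> where z: "z = (W, \<pi>)"
      and W: "W \<in> carrier (product_group {d. d dvd n \<and> d \<noteq> 1} (\<lambda>d. wreath d (alpha d (card A))))"
      and \<pi>: "\<pi> \<in> carrier (sym_group (card A))"
      by auto
    define \<phi> where "\<phi> d = (if d = 1 then \<pi> else snd (W d))" for d
    define w where "w d = (if d = 1 then (\<lambda>_. 0) else fst (W d))" for d
    have Wd: "W d \<in> carrier (wreath d (alpha d (card A)))" if "d dvd n" "d \<noteq> 1" for d
      using W that by auto
    have \<phi>: "\<phi> d permutes labels d" if "d dvd n" for d
      using Wd[OF that] \<pi> alpha_1[unfolded One_nat_def]
      by (cases "d = 1") (auto simp: \<phi>_def wreath_carrier sym_group_carrier)
    have w: "w d j < d" if "d dvd n" "j \<in> labels d" for d j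
      using Wd[OF that(1)] that by (cases "d = 1") (auto simp: w_def wreath_carrier)
    obtain \<tau> where t: "\<tau> \<in> Units CA"
      and b: "\<And>d j. d dvd n \<Longrightarrow> j \<in> labels d \<Longrightarrow> base_image \<tau> d j = (d, Hilbert_Choice.inv (\<phi> d) j, w d j)"
      using affine_coords_CA_unit[of "\<lambda>d. Hilbert_Choice.inv (\<phi> d)" w] \<phi> w permutes_inv by blast
    have "(\<lambda>d\<in>{d. d dvd n \<and> d \<noteq> 1}. (restrict (w d) (labels d), \<phi> d)) = restrict W {d. d dvd n \<and> d \<noteq> 1}"
    proof (rule restrict_ext)
      fix d assume "d \<in> {d. d dvd n \<and> d \<noteq> 1}"
      then have "d dvd n" "d \<noteq> 1" by auto
      then have "fst (W d) \<in> labels d \<rightarrow>\<^sub>E {0..<d}" "d \<noteq> 1"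
        using Wd unfolding wreath_carrier mem_Times_iff by blast+
      then show "(restrict (w d) (labels d), \<phi> d) = W d" by (simp add: \<phi>_def w_def PiE_restrict)
    qed
    also have "\<dots> = W" using W by (simp add: PiE_restrict)
    finally have "to_wreath \<tau> = (W, \<pi>)" using to_wreath_eqI[OF t \<phi> b] by (simp add: \<phi>_def)
    then show "z \<in> to_wreath ` Units CA" unfolding z by (rule image_eqI[OF sym t])
  qed
qed

lemma to_wreath_iso: "to_wreath \<in> iso (ICA n A) wreaths"
  using to_wreath_mult inj_on_to_wreath to_wreath_surj
  by (auto simp: iso_def hom_def bij_betw_def ICA_def units_of_carrier units_of_mult)

end

theorem lemma4:
  fixes n q :: nat and A :: "'a set"
  assumes "n \<ge> 2" and "finite A" and "card A = q" and "q \<ge> 2"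
  shows "ICA n A \<cong>
           DirProd (product_group {d. d dvd n \<and> d \<noteq> 1} (\<lambda>d. wreath d (alpha d q)))
                   (sym_group q)"
proof -
  have n: "n > 0" using assms(1) by simp
  obtain \<beta> where "equivariant_coords n A \<beta>"
    using exists_equivariant_coords[OF n assms(2)] n by (metis equivariant_coords.intro)
  then interpret equivariant_coords n A \<beta> .
  show ?thesis using is_isoI[OF to_wreath_iso] assms(3) by simp
qed

end
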